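(* Let $\Omega\in\mathbb{C}^{N\times N}$ be skew-Hermitian and let $A\neq 0$ be an eigenvector of $\mathrm{ad}_\Omega$ to the non-zero eigenvalue $i\varphi$, $\varphi\in\mathbb{R}\setminus\{0\}$. Then: (a) $A^\dagger$ is an eigenvector of $\mathrm{ad}_\Omega$ to the eigenvalue $-i\varphi$; (b) $A$ is nilpotent; (c) $[A,A^\dagger]\neq 0$ and $[\Omega,[A,A^\dagger]]=0$.
   Context: $\mathrm{ad}_\Omega(X)=[\Omega,X]=\Omega X-X\Omega$. *)

theory Defs
  imports "Jordan_Normal_Form.Schur_Decomposition"
begin

definition ad :: "complex mat \<Rightarrow> complex mat \<Rightarrow> complex mat" where
  "ad \<Omega> X = \<Omega> * X - X * \<Omega>"

definition skew_hermitian :: "complex mat \<Rightarrow> bool" where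
  "skew_hermitian \<Omega> \<longleftrightarrow> mat_adjoint \<Omega> = - \<Omega>"

definition nilpotent_mat :: "complex mat \<Rightarrow> bool" where
  "nilpotent_mat A \<longleftrightarrow> (\<exists>k. A ^\<^sub>m k = 0\<^sub>m (dim_row A) (dim_col A))"

end

theory Submission
  imports Defs
begin

(* For skew-Hermitian \<Omega>, taking adjoints commutes with ad\<^sub>\<Omega>, which gives (a).
   Since ad\<^sub>\<Omega> is a derivation, eigenvalues add under products: A^k is an eigenvector
   to k i\<phi> unless it vanishes, and [A, A\<^sup>\<dagger>] is an eigenvector to i\<phi> - i\<phi> = 0.
   The eigenvalues of ad\<^sub>\<Omega> are bounded by twice the entrywise l1-norm of \<Omega>, so A^k = 0
   for large k.  Finally [A, A\<^sup>\<dagger>] = 0 would make A normal, and a normal nilpotent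
   matrix vanishes: X Y Y\<^sup>\<dagger> = 0 forces X Y = 0, which peels off one power of A at a time. *)

lemma dim_row_mat_adjoint [simp]: "dim_row (mat_adjoint A) = dim_col A"
  and dim_col_mat_adjoint [simp]: "dim_col (mat_adjoint A) = dim_row A"
  by (simp_all add: mat_adjoint_def)

lemma mat_adjoint_carrier [simp]: "A \<in> carrier_mat n m \<Longrightarrow> mat_adjoint A \<in> carrier_mat m n"
  by auto

lemma index_mat_adjoint [simp]:
  "i < dim_col A \<Longrightarrow> j < dim_row A \<Longrightarrow> mat_adjoint A $$ (i, j) = conjugate (A $$ (j, i))"
  by (simp add: mat_adjoint_def mat_of_rows_def)

lemma mat_adjoint_adjoint [simp]: "mat_adjoint (mat_adjoint A) = A"
  by (rule eq_matI) auto

lemma mat_adjoint_zero [simp]: "mat_adjoint (0\<^sub>m n m) = 0\<^sub>m m n"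
  by (rule eq_matI) auto

lemma mat_adjoint_eq_zero_iff [simp]: "mat_adjoint A = 0\<^sub>m m n \<longleftrightarrow> A = 0\<^sub>m n m"
  by (metis mat_adjoint_adjoint mat_adjoint_zero)

lemma mat_adjoint_mult:
  fixes A B :: "'a :: conjugatable_field mat"
  assumes "A \<in> carrier_mat n m" and "B \<in> carrier_mat m k"
  shows "mat_adjoint (A * B) = mat_adjoint B * mat_adjoint A"
  using assms
  by (intro eq_matI)
    (auto simp: scalar_prod_def sum_conjugate conjugate_dist_mul mult.commute intro!: sum.cong)

lemma mat_adjoint_smult: "mat_adjoint (c \<cdot>\<^sub>m A) = conjugate c \<cdot>\<^sub>m mat_adjoint A"
  by (intro eq_matI) (auto simp: conjugate_dist_mul)

lemma conjugate_dist_diff: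
  fixes a b :: "'a :: conjugatable_ring"
  shows "conjugate (a - b) = conjugate a - conjugate b"
  by (metis conjugate_dist_add conjugate_neg diff_conv_add_uminus)

lemma mat_adjoint_minus:
  "A \<in> carrier_mat n m \<Longrightarrow> B \<in> carrier_mat n m \<Longrightarrow>
    mat_adjoint (A - B) = mat_adjoint A - mat_adjoint B"
  by (intro eq_matI) (auto simp: conjugate_dist_diff)

lemma ad_mat_adjoint:
  assumes W: "W \<in> carrier_mat n n" and X: "X \<in> carrier_mat n n" and "skew_hermitian W"
  shows "ad W (mat_adjoint X) = mat_adjoint (ad W X)"
proof -
  have W_adj: "mat_adjoint W = - W" using \<open>skew_hermitian W\<close> by (simp add: skew_hermitian_def)
  have "mat_adjoint (ad W X) = mat_adjoint (W * X) - mat_adjoint (X * W)"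
    unfolding ad_def by (rule mat_adjoint_minus) (use W X in auto)
  also have "\<dots> = mat_adjoint X * (- W) - (- W) * mat_adjoint X"
    unfolding mat_adjoint_mult[OF W X] mat_adjoint_mult[OF X W] W_adj ..
  also have "\<dots> = - (mat_adjoint X * W) - - (W * mat_adjoint X)"
    using W X by simp
  also have "\<dots> = ad W (mat_adjoint X)"
    unfolding ad_def using W X by (intro eq_matI) auto
  finally show ?thesis ..
qed

lemma minus_telescope_mat:
  fixes P Q R :: "'a :: ab_group_add mat"
  assumes "P \<in> carrier_mat n m" and "Q \<in> carrier_mat n m" and "R \<in> carrier_mat n m"
  shows "P - R = (P - Q) + (Q - R)"
  using assms by (intro eq_matI) auto

lemma ad_mult:
  assumes "W \<in> carrier_mat n n" and "X \<in> carrier_mat n n" and "Y \<in> carrier_mat n n"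
  shows "ad W (X * Y) = ad W X * Y + X * ad W Y"
proof -
  have "ad W (X * Y) = W * X * Y - X * (Y * W)"
    using assms by (simp add: ad_def)
  also have "\<dots> = (W * X * Y - X * (W * Y)) + (X * (W * Y) - X * (Y * W))"
    by (rule minus_telescope_mat) (use assms in auto)
  also have "W * X * Y - X * (W * Y) = ad W X * Y"
    unfolding ad_def using assms by (subst minus_mult_distrib_mat[of _ n n]) auto
  also have "X * (W * Y) - X * (Y * W) = X * ad W Y"
    unfolding ad_def by (rule mult_minus_distrib_mat[symmetric]) (use assms in auto)
  finally show ?thesis .
qed

lemma ad_mult_eigen:
  assumes "W \<in> carrier_mat n n" and "X \<in> carrier_mat n n" and "Y \<in> carrier_mat n n"
    and "ad W X = a \<cdot>\<^sub>m X" and "ad W Y = b \<cdot>\<^sub>m Y"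
  shows "ad W (X * Y) = (a + b) \<cdot>\<^sub>m (X * Y)"
proof -
  have "ad W (X * Y) = a \<cdot>\<^sub>m X * Y + X * (b \<cdot>\<^sub>m Y)"
    using assms by (simp add: ad_mult[of _ n])
  also have "\<dots> = (a + b) \<cdot>\<^sub>m (X * Y)"
    using assms
    by (simp add: mult_smult_assoc_mat[of _ n n] mult_smult_distrib[of _ n n]
        add_smult_distrib_right_mat[of _ n n])
  finally show ?thesis .
qed

lemma ad_power_eigen:
  assumes W: "W \<in> carrier_mat n n" and X: "X \<in> carrier_mat n n" and "ad W X = a \<cdot>\<^sub>m X"
  shows "ad W (X ^\<^sub>m k) = (of_nat k * a) \<cdot>\<^sub>m (X ^\<^sub>m k)"
proof (induction k)
  case 0
  show ?case using W X by (intro eq_matI) (auto simp: ad_def)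
next
  case (Suc k)
  have "ad W (X ^\<^sub>m k * X) = (of_nat k * a + a) \<cdot>\<^sub>m (X ^\<^sub>m k * X)"
    using assms Suc.IH by (intro ad_mult_eigen[of _ n]) auto
  then show ?case by (simp add: algebra_simps)
qed

lemma ad_commutator_eigen:
  assumes "W \<in> carrier_mat n n" and "X \<in> carrier_mat n n" and "Y \<in> carrier_mat n n"
    and "ad W X = a \<cdot>\<^sub>m X" and "ad W Y = b \<cdot>\<^sub>m Y"
  shows "ad W (ad X Y) = (a + b) \<cdot>\<^sub>m ad X Y"
proof -
  have "ad W (ad X Y) = ad W (X * Y) - ad W (Y * X)"
    using assms(1-3) unfolding ad_def
    by (simp add: mult_minus_distrib_mat[of _ n n _ n] minus_mult_distrib_mat[of _ n n],
        intro eq_matI, auto)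
  also have "\<dots> = (a + b) \<cdot>\<^sub>m (X * Y) - (a + b) \<cdot>\<^sub>m (Y * X)"
    using ad_mult_eigen[OF assms(1-5)] ad_mult_eigen[OF assms(1,3,2,5,4)] by (simp add: add.commute)
  also have "\<dots> = (a + b) \<cdot>\<^sub>m ad X Y"
    using assms(2,3) unfolding ad_def by (intro eq_matI) (auto simp: algebra_simps)
  finally show ?thesis .
qed

definition mat_sum_norm :: "'a :: real_normed_field mat \<Rightarrow> real" where
  "mat_sum_norm A = (\<Sum>i<dim_row A. \<Sum>j<dim_col A. norm (A $$ (i, j)))"

lemma row_norm_le_mat_sum_norm:
  assumes "A \<in> carrier_mat n m" and "i < n"
  shows "(\<Sum>j<m. norm (A $$ (i, j))) \<le> mat_sum_norm A"
proof -
  have "(\<Sum>j<m. norm (A $$ (i, j))) \<le> (\<Sum>i'<n. \<Sum>j<m. norm (A $$ (i', j)))"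
    using \<open>i < n\<close>
    by (intro member_le_sum[where f = "\<lambda>i. \<Sum>j<m. norm (A $$ (i, j))"]) (auto intro: sum_nonneg)
  then show ?thesis using assms(1) by (simp add: mat_sum_norm_def)
qed

lemma mat_sum_norm_pos:
  assumes "A \<in> carrier_mat n m" and "A \<noteq> 0\<^sub>m n m"
  shows "mat_sum_norm A > 0"
proof -
  obtain i j where "i < n" "j < m" "A $$ (i, j) \<noteq> 0"
    using assms by (metis carrier_matD eq_matI index_zero_mat)
  have "0 < norm (A $$ (i, j))" using \<open>A $$ (i, j) \<noteq> 0\<close> by simp
  also have "\<dots> \<le> (\<Sum>j<m. norm (A $$ (i, j)))"
    using \<open>j < m\<close> by (intro member_le_sum) auto
  also have "\<dots> \<le> mat_sum_norm A"
    using assms(1) \<open>i < n\<close> by (rule row_norm_le_mat_sum_norm)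
  finally show ?thesis .
qed

lemma mat_sum_norm_smult: "mat_sum_norm (c \<cdot>\<^sub>m A) = norm c * mat_sum_norm A"
  by (simp add: mat_sum_norm_def norm_mult sum_distrib_left)

lemma mat_sum_norm_minus_le:
  assumes "A \<in> carrier_mat n m" and "B \<in> carrier_mat n m"
  shows "mat_sum_norm (A - B) \<le> mat_sum_norm A + mat_sum_norm B"
proof -
  have "mat_sum_norm (A - B) = (\<Sum>i<n. \<Sum>j<m. norm (A $$ (i, j) - B $$ (i, j)))"
    using assms by (simp add: mat_sum_norm_def)
  also have "\<dots> \<le> (\<Sum>i<n. \<Sum>j<m. norm (A $$ (i, j)) + norm (B $$ (i, j)))"
    by (intro sum_mono norm_triangle_ineq4)
  also have "\<dots> = mat_sum_norm A + mat_sum_norm B"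
    using assms by (simp add: mat_sum_norm_def sum.distrib)
  finally show ?thesis .
qed

lemma mat_sum_norm_mult_le:
  assumes A: "A \<in> carrier_mat n m" and B: "B \<in> carrier_mat m k"
  shows "mat_sum_norm (A * B) \<le> mat_sum_norm A * mat_sum_norm B"
proof -
  have "mat_sum_norm (A * B) = (\<Sum>i<n. \<Sum>l<k. norm (\<Sum>j<m. A $$ (i, j) * B $$ (j, l)))"
    unfolding mat_sum_norm_def using A B
    by (auto simp: scalar_prod_def atLeast0LessThan intro!: sum.cong)
  also have "\<dots> \<le> (\<Sum>i<n. \<Sum>l<k. \<Sum>j<m. norm (A $$ (i, j)) * norm (B $$ (j, l)))"
    by (intro sum_mono order_trans[OF norm_sum]) (simp add: norm_mult)
  also have "\<dots> = (\<Sum>i<n. \<Sum>j<m. norm (A $$ (i, j)) * (\<Sum>l<k. norm (B $$ (j, l))))"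
    by (simp add: sum_distrib_left) (intro sum.cong[OF refl] sum.swap)
  also have "\<dots> \<le> (\<Sum>i<n. \<Sum>j<m. norm (A $$ (i, j)) * mat_sum_norm B)"
    by (intro sum_mono mult_left_mono row_norm_le_mat_sum_norm[OF B]) auto
  also have "\<dots> = mat_sum_norm A * mat_sum_norm B"
    unfolding mat_sum_norm_def using A by (simp add: sum_distrib_right)
  finally show ?thesis .
qed

lemma ad_eigenvalue_norm_le:
  assumes W: "W \<in> carrier_mat n n" and X: "X \<in> carrier_mat n n"
    and eigen: "ad W X = d \<cdot>\<^sub>m X" and "X \<noteq> 0\<^sub>m n n"
  shows "norm d \<le> 2 * mat_sum_norm W"
proof -
  have "norm d * mat_sum_norm X = mat_sum_norm (W * X - X * W)"
    using eigen by (simp add: ad_def mat_sum_norm_smult)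
  also have "\<dots> \<le> mat_sum_norm W * mat_sum_norm X + mat_sum_norm X * mat_sum_norm W"
    using W X
    by (intro order_trans[OF mat_sum_norm_minus_le[of _ n n]] add_mono mat_sum_norm_mult_le) auto
  finally have "norm d * mat_sum_norm X \<le> (2 * mat_sum_norm W) * mat_sum_norm X"
    by (simp add: algebra_simps)
  then show ?thesis
    using mat_sum_norm_pos[OF X \<open>X \<noteq> 0\<^sub>m n n\<close>] by simp
qed

lemma ad_eigenvector_nilpotent:
  assumes W: "W \<in> carrier_mat n n" and A: "A \<in> carrier_mat n n"
    and eigen: "ad W A = d \<cdot>\<^sub>m A" and "d \<noteq> 0"
  shows "nilpotent_mat A"
proof -
  obtain k :: nat where k: "2 * mat_sum_norm W < of_nat k * norm d"
    using \<open>d \<noteq> 0\<close> by (metis ex_less_of_nat_mult zero_less_norm_iff)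
  have "A ^\<^sub>m k = 0\<^sub>m n n"
  proof (rule ccontr)
    assume "A ^\<^sub>m k \<noteq> 0\<^sub>m n n"
    with W A ad_power_eigen[OF W A eigen]
    have "norm (of_nat k * d) \<le> 2 * mat_sum_norm W"
      by (intro ad_eigenvalue_norm_le) auto
    with k show False by (simp add: norm_mult)
  qed
  then show ?thesis
    using A by (auto simp: nilpotent_mat_def)
qed

lemma mult_mat_adjoint_self_eq_zero:
  fixes X :: "'a :: conjugatable_ordered_field mat"
  assumes X: "X \<in> carrier_mat n m" and "X * mat_adjoint X = 0\<^sub>m n n"
  shows "X = 0\<^sub>m n m"
proof (rule eq_matI)
  fix i j assume "i < dim_row (0\<^sub>m n m :: 'a mat)" and "j < dim_col (0\<^sub>m n m :: 'a mat)"
  then have i: "i < n" and j: "j < m" by auto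
  have "(\<Sum>l<m. X $$ (i, l) * conjugate (X $$ (i, l))) = (X * mat_adjoint X) $$ (i, i)"
    using X i by (auto simp: scalar_prod_def atLeast0LessThan intro!: sum.cong)
  also have "\<dots> = 0" using assms(2) i by simp
  finally have "\<forall>l\<in>{..<m}. X $$ (i, l) * conjugate (X $$ (i, l)) = 0"
    by (subst sum_nonneg_eq_0_iff[symmetric]) (auto intro: conjugate_square_positive)
  then show "X $$ (i, j) = 0\<^sub>m n m $$ (i, j)" using i j by simp
qed (use X in auto)

lemma mult_mat_adjoint_cancel:
  fixes X Y :: "'a :: conjugatable_ordered_field mat"
  assumes X: "X \<in> carrier_mat m n" and Y: "Y \<in> carrier_mat n k"
    and "X * Y * mat_adjoint Y = 0\<^sub>m m n"
  shows "X * Y = 0\<^sub>m m k"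
proof (rule mult_mat_adjoint_self_eq_zero)
  have "X * Y * mat_adjoint (X * Y) = X * Y * (mat_adjoint Y * mat_adjoint X)"
    by (simp only: mat_adjoint_mult[OF X Y])
  also have "\<dots> = X * Y * mat_adjoint Y * mat_adjoint X"
    by (rule assoc_mult_mat[symmetric]) (use X Y in auto)
  also have "\<dots> = 0\<^sub>m m m"
    using X \<open>X * Y * mat_adjoint Y = 0\<^sub>m m n\<close> by simp
  finally show "X * Y * mat_adjoint (X * Y) = 0\<^sub>m m m" .
qed (use X Y in simp)

lemma normal_mat_mult_square_eq_zero:
  fixes A Q :: "'a :: conjugatable_ordered_field mat"
  assumes A: "A \<in> carrier_mat n n" and Q: "Q \<in> carrier_mat m n"
    and normal: "A * mat_adjoint A = mat_adjoint A * A" and "Q * A * A = 0\<^sub>m m n"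
  shows "Q * A = 0\<^sub>m m n"
proof (rule mult_mat_adjoint_cancel[OF Q A])
  have QA: "Q * A \<in> carrier_mat m n" and A_adj: "mat_adjoint A \<in> carrier_mat n n"
    using Q A by auto
  have "Q * A * mat_adjoint A * mat_adjoint (mat_adjoint A) = Q * A * (mat_adjoint A * A)"
    unfolding mat_adjoint_adjoint by (rule assoc_mult_mat[OF QA A_adj A])
  also have "\<dots> = Q * A * A * mat_adjoint A"
    unfolding normal[symmetric] by (rule assoc_mult_mat[symmetric, OF QA A A_adj])
  also have "\<dots> = 0\<^sub>m m n"
    unfolding \<open>Q * A * A = 0\<^sub>m m n\<close> by (rule left_mult_zero_mat[OF A_adj])
  finally show "Q * A * mat_adjoint A = 0\<^sub>m m n"
    by (rule mult_mat_adjoint_cancel[OF QA A_adj])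
qed

lemma normal_nilpotent_mat_eq_zero:
  assumes A: "A \<in> carrier_mat n n" and normal: "A * mat_adjoint A = mat_adjoint A * A"
    and "nilpotent_mat A"
  shows "A = 0\<^sub>m n n"
proof -
  obtain k where "A ^\<^sub>m k = 0\<^sub>m n n"
    using \<open>nilpotent_mat A\<close> A by (auto simp: nilpotent_mat_def)
  then have "A ^\<^sub>m Suc k = 0\<^sub>m n n"
    using A by simp
  then show ?thesis
  proof (induction k)
    case 0
    then show ?case using A by simp
  next
    case (Suc j)
    then have "A ^\<^sub>m j * A * A = 0\<^sub>m n n"
      by simp
    then have "A ^\<^sub>m j * A = 0\<^sub>m n n"
      by (rule normal_mat_mult_square_eq_zero[OF A pow_carrier_mat[OF A] normal])
    then show ?case
      using Suc.IH by simp
  qed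
qed

lemma ad_eq_zero_iff:
  assumes "W \<in> carrier_mat n n" and "X \<in> carrier_mat n n"
  shows "ad W X = 0\<^sub>m n n \<longleftrightarrow> W * X = X * W"
proof
  assume commutator: "ad W X = 0\<^sub>m n n"
  show "W * X = X * W"
  proof (rule eq_matI)
    fix i j assume "i < dim_row (X * W)" and "j < dim_col (X * W)"
    then have "ad W X $$ (i, j) = 0"
      using assms commutator by simp
    then show "(W * X) $$ (i, j) = (X * W) $$ (i, j)"
      using assms \<open>i < dim_row (X * W)\<close> \<open>j < dim_col (X * W)\<close> by (simp add: ad_def)
  qed (use assms in auto)
next
  assume "W * X = X * W"
  then show "ad W X = 0\<^sub>m n n"
    using assms by (simp add: ad_def)
qed

theorem lemma2p24:
  fixes \<Omega> A :: "complex mat" and N :: nat and \<phi> :: real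
  assumes "\<Omega> \<in> carrier_mat N N" and "A \<in> carrier_mat N N"
    and "skew_hermitian \<Omega>"
    and "A \<noteq> 0\<^sub>m N N"
    and "\<phi> \<noteq> 0"
    and "ad \<Omega> A = (\<i> * complex_of_real \<phi>) \<cdot>\<^sub>m A"
  shows "(mat_adjoint A \<noteq> 0\<^sub>m N N \<and> ad \<Omega> (mat_adjoint A) = (- \<i> * complex_of_real \<phi>) \<cdot>\<^sub>m mat_adjoint A)
    \<and> nilpotent_mat A
    \<and> (ad A (mat_adjoint A) \<noteq> 0\<^sub>m N N
    \<and> ad \<Omega> (ad A (mat_adjoint A)) = 0\<^sub>m N N)"
proof -
  note \<Omega> = assms(1) and A = assms(2) and eigen = assms(6)
  have adjoint_eigen: "ad \<Omega> (mat_adjoint A) = (- \<i> * complex_of_real \<phi>) \<cdot>\<^sub>m mat_adjoint A"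
    using ad_mat_adjoint[OF \<Omega> A \<open>skew_hermitian \<Omega>\<close>] by (simp add: eigen mat_adjoint_smult)
  have nilpotent: "nilpotent_mat A"
    using ad_eigenvector_nilpotent[OF \<Omega> A eigen] \<open>\<phi> \<noteq> 0\<close> by simp
  have "ad \<Omega> (ad A (mat_adjoint A)) = 0 \<cdot>\<^sub>m ad A (mat_adjoint A)"
    using ad_commutator_eigen[OF \<Omega> A _ eigen adjoint_eigen] A by simp
  then have central: "ad \<Omega> (ad A (mat_adjoint A)) = 0\<^sub>m N N"
    using A by (intro eq_matI) (auto simp: ad_def)
  have "ad A (mat_adjoint A) \<noteq> 0\<^sub>m N N"
  proof
    assume "ad A (mat_adjoint A) = 0\<^sub>m N N"
    then have "A * mat_adjoint A = mat_adjoint A * A"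
      using A by (simp add: ad_eq_zero_iff)
    with A nilpotent \<open>A \<noteq> 0\<^sub>m N N\<close> show False
      using normal_nilpotent_mat_eq_zero by blast
  qed
  with assms(4) A adjoint_eigen nilpotent central show ?thesis
    by simp
qed

end
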